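(* Let $A\subseteq\mathbb{N}$ and $x\in\big(\underline{d}_\infty(A),\overline{d}_\infty(A)\big)$. Then there is a function $\mu:\mathcal{P}(\mathbb{N})\to[0,1]$ of the form $$\mu(E)=\int_{\Omega}\mu_\alpha^{\mathcal{F}}(E)\,\mathrm{d}\psi(\mathcal{F},\alpha),\qquad E\subseteq\mathbb{N},$$ for some Borel probability measure $\psi$ on $\Omega=\beta\mathbb{N}^*\times[-1,\infty)$, which is a density measure and satisfies $\mu(A)=x$.
   Context: $\mathbb{N}=\{1,2,3,\dots\}$. For $A\subseteq\mathbb{N}$ let $A(n)=|A\cap[1,n]|$; $\mathcal{D}$ is the collection of sets for which $d(A)=\lim_{n\to\infty}A(n)/n$ exists. A density measure is a function $\mu:\mathcal{P}(\mathbb{N})\to[0,1]$ with $\mu(\mathbb{N})=1$, finitely additive on disjoint sets, and $\mu=d$ on $\mathcal{D}$. For $\alpha\ge-1$ and $A\subseteq\mathbb{N}$ put $A_\alpha(n)=\sum_{k=1}^n\chi_A(k)k^\alpha$ (so $\mathbb{N}_\alpha(n)=\sum_{k=1}^nk^\alpha$), $\underline{d}_\alpha(A)=\liminf_{n\to\infty}\frac{A_\alpha(n)}{\mathbb{N}_\alpha(n)}$, $\overline{d}_\alpha(A)=\limsup_{n\to\infty}\frac{A_\alpha(n)}{\mathbb{N}_\alpha(n)}$, $\underline{d}_\infty(A)=\inf_{\alpha\ge-1}\underline{d}_\alpha(A)$ and $\overline{d}_\infty(A)=\sup_{\alpha\ge-1}\overline{d}_\alpha(A)$. $\beta\mathbb{N}^*$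 denotes the set of free ultrafilters on $\mathbb{N}$ (with the Stone–Čech topology). For a free ultrafilter $\mathcal{F}$ and a bounded real sequence $(x_n)$, $\mathcal{F}\text{-}\lim x_n$ is the unique $L$ with $\{n;|x_n-L|<\varepsilon\}\in\mathcal{F}$ for all $\varepsilon>0$. Set $\mu_\alpha^{\mathcal{F}}(E)=\mathcal{F}\text{-}\lim\frac{E_\alpha(n)}{\mathbb{N}_\alpha(n)}$. *)

theory Defs
  imports "HOL-Probability.Probability"
begin

text \<open>The paper's \<open>\<nat> = {1,2,3,...}\<close> is rendered as the set \<open>{1..} :: nat set\<close>.\<close>

definition Npos :: "nat set" where "Npos = {1..}"

definition cnt :: "nat set \<Rightarrow> nat \<Rightarrow> nat" where
  "cnt A n = card (A \<inter> {1..n})"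

definition has_density :: "nat set \<Rightarrow> real \<Rightarrow> bool" where
  "has_density A L \<longleftrightarrow> ((\<lambda>n. real (cnt A n) / real n) \<longlonglongrightarrow> L)"

definition density_measure :: "(nat set \<Rightarrow> real) \<Rightarrow> bool" where
  "density_measure \<mu> \<longleftrightarrow>
     (\<forall>E. E \<subseteq> Npos \<longrightarrow> 0 \<le> \<mu> E \<and> \<mu> E \<le> 1) \<and>
     \<mu> Npos = 1 \<and>
     (\<forall>E F. E \<subseteq> Npos \<longrightarrow> F \<subseteq> Npos \<longrightarrow> E \<inter> F = {} \<longrightarrow> \<mu> (E \<union> F) = \<mu> E + \<mu> F) \<and>
     (\<forall>E L. E \<subseteq> Npos \<longrightarrow> has_density E L \<longrightarrow> \<mu> E = L)"

definition wcnt :: "real \<Rightarrow> nat set \<Rightarrow> nat \<Rightarrow> real" where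
  "wcnt \<alpha> A n = (\<Sum>k\<in>A \<inter> {1..n}. real k powr \<alpha>)"

definition wratio :: "real \<Rightarrow> nat set \<Rightarrow> nat \<Rightarrow> real" where
  "wratio \<alpha> A n = wcnt \<alpha> A n / wcnt \<alpha> Npos n"

definition lower_d_alpha :: "real \<Rightarrow> nat set \<Rightarrow> ereal" where
  "lower_d_alpha \<alpha> A = liminf (\<lambda>n. ereal (wratio \<alpha> A n))"

definition upper_d_alpha :: "real \<Rightarrow> nat set \<Rightarrow> ereal" where
  "upper_d_alpha \<alpha> A = limsup (\<lambda>n. ereal (wratio \<alpha> A n))"

definition lower_d_inf :: "nat set \<Rightarrow> ereal" where
  "lower_d_inf A = (INF \<alpha>\<in>{-1..}. lower_d_alpha \<alpha> A)"

definition upper_d_inf :: "nat set \<Rightarrow> ereal" where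
  "upper_d_inf A = (SUP \<alpha>\<in>{-1..}. upper_d_alpha \<alpha> A)"

definition free_ultrafilter :: "nat filter \<Rightarrow> bool" where
  "free_ultrafilter F \<longleftrightarrow>
     F \<noteq> bot \<and> (\<forall>P. eventually P F \<or> eventually (\<lambda>n. \<not> P n) F) \<and> F \<le> cofinite"

definition betaNstar :: "nat filter set" where
  "betaNstar = {F. free_ultrafilter F}"

text \<open>Stone--Cech topology on \<open>\<beta>\<nat>*\<close>: basic open sets \<open>{F. A \<in> F}\<close>\<close>
definition stone_topology :: "nat filter topology" where
  "stone_topology = subtopology
     (topology_generated_by (range (\<lambda>A. {F. eventually (\<lambda>n. n \<in> A) F}))) betaNstar"

definition Omega_topology :: "(nat filter \<times> real) topology" where
  "Omega_topology = prod_topology stone_topology (top_of_set {-1..})"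

definition borel_of :: "'a topology \<Rightarrow> 'a measure" where
  "borel_of X = sigma (topspace X) {U. openin X U}"

definition F_lim :: "nat filter \<Rightarrow> (nat \<Rightarrow> real) \<Rightarrow> real" where
  "F_lim F x = Lim F x"

definition mu_alpha_F :: "nat filter \<Rightarrow> real \<Rightarrow> nat set \<Rightarrow> real" where
  "mu_alpha_F F \<alpha> E = F_lim F (wratio \<alpha> E)"

end

theory Submission
  imports Defs
begin

text \<open>For a free ultrafilter \<open>F\<close> and \<open>\<alpha> \<ge> -1\<close>, the \<open>F\<close>-limit \<open>mu_alpha_F F \<alpha>\<close> of the
\<open>\<alpha>\<close>-weighted counting ratios is a density measure: additivity is linearity of the \<open>F\<close>-limit,
and by Abel summation a set with natural density has the same \<open>\<alpha>\<close>-density. Since \<open>x\<close> lies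
strictly between the lower and upper \<open>\<infinity>\<close>-densities of \<open>A\<close>, an ultrafilter refining the
sequences along which the ratios stay below resp. above \<open>x\<close> gives
\<open>mu_alpha_F F\<^sub>1 \<alpha>\<^sub>1 A \<le> x \<le> mu_alpha_F F\<^sub>2 \<alpha>\<^sub>2 A\<close>, and a two-point probability measure \<open>\<psi>\<close>
with suitable weights does the job. The real work is the Borel measurability of
\<open>(F, \<alpha>) \<mapsto> mu_alpha_F F \<alpha> E\<close> on \<open>\<Omega>\<close>: it is continuous in \<open>F\<close>, and for \<open>\<beta> > -1\<close> it is
Lipschitz in \<open>\<alpha> \<in> [\<beta>, \<beta> + \<delta>]\<close> uniformly in \<open>F\<close>, so it is the pointwise limit of the functions
obtained by rounding \<open>\<alpha>\<close> up to the dyadic grid (rounding up keeps \<open>\<alpha> = -1\<close> fixed).\<close>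

section \<open>Ultrafilters\<close>

definition ultrafilter :: "'a filter \<Rightarrow> bool" where
  "ultrafilter F \<longleftrightarrow> F \<noteq> bot \<and> (\<forall>P. eventually P F \<or> eventually (\<lambda>x. \<not> P x) F)"

lemma free_ultrafilter_iff: "free_ultrafilter F \<longleftrightarrow> ultrafilter F \<and> F \<le> cofinite"
  by (auto simp: free_ultrafilter_def ultrafilter_def)

lemma ultrafilter_if_minimal:
  assumes "F \<noteq> bot" and minimal: "\<And>H. H \<noteq> bot \<Longrightarrow> H \<le> F \<Longrightarrow> H = F"
  shows "ultrafilter F"
  unfolding ultrafilter_def
proof (intro conjI allI disjCI)
  fix P assume "\<not> eventually (\<lambda>x. \<not> P x) F"
  then have "inf F (principal {x. P x}) \<noteq> bot"
    by (simp add: trivial_limit_def eventually_inf_principal not_eventually)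
  then have "inf F (principal {x. P x}) = F"
    by (rule minimal) simp
  moreover have "eventually P (inf F (principal {x. P x}))"
    by (simp add: eventually_inf_principal)
  ultimately show "eventually P F" by simp
qed (rule assms(1))

lemma ex_ultrafilter_le:
  assumes "G \<noteq> bot"
  shows "\<exists>U\<le>G. ultrafilter U"
proof -
  define \<F> where "\<F> = {H. H \<noteq> bot \<and> H \<le> G}"
  have "\<exists>U\<in>\<F>. \<forall>H\<in>\<F>. U \<ge> H \<longrightarrow> H = U"
  proof (rule predicate_Zorn)
    show "partial_order_on \<F> (relation_of (\<ge>) \<F>)"
      by (auto simp: partial_order_on_def preorder_on_def refl_on_def trans_def antisym_def
          relation_of_def)
    show "\<exists>U\<in>\<F>. \<forall>H\<in>C. H \<ge> U" if C: "C \<in> Chains (relation_of (\<ge>) \<F>)" for C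
    proof (cases "C = {}")
      case True
      then show ?thesis using assms by (auto simp: \<F>_def)
    next
      case False
      have C\<F>: "C \<subseteq> \<F>" and total: "\<And>H K. H \<in> C \<Longrightarrow> K \<in> C \<Longrightarrow> H \<le> K \<or> K \<le> H"
        using C by (auto simp: Chains_def relation_of_def)
      have "Inf C \<noteq> bot"
      proof -
        have "\<exists>H\<in>C. H \<le> inf K1 K2" if "K1 \<in> C" "K2 \<in> C" for K1 K2
          using total[OF that] that by (metis inf.absorb_iff1 inf.absorb_iff2 order_refl)
        then show ?thesis
          unfolding trivial_limit_def using False C\<F>
          by (subst eventually_Inf_base) (auto simp: \<F>_def trivial_limit_def)
      qed
      moreover have "Inf C \<le> G"
        using False C\<F> by (auto intro: Inf_lower2 simp: \<F>_def)
      ultimately show ?thesis by (intro bexI[of _ "Inf C"]) (auto intro: Inf_lower simp: \<F>_def)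
    qed
  qed
  then obtain U where "U \<noteq> bot" "U \<le> G" "\<And>H. H \<noteq> bot \<Longrightarrow> H \<le> U \<Longrightarrow> H = U"
    by (force simp: \<F>_def)
  then show ?thesis using ultrafilter_if_minimal by blast
qed

lemma ex_free_ultrafilter_eventually_in:
  assumes "infinite (S :: nat set)"
  shows "\<exists>F. free_ultrafilter F \<and> eventually (\<lambda>n. n \<in> S) F"
proof -
  have "inf cofinite (principal S) \<noteq> bot"
    using assms by (simp add: trivial_limit_def eventually_inf_principal eventually_cofinite)
  then obtain U where "U \<le> inf cofinite (principal S)" "ultrafilter U"
    using ex_ultrafilter_le by blast
  then show ?thesis
    by (metis free_ultrafilter_iff eventually_principal inf.boundedE le_filter_def)
qed

lemma ultrafilter_tendsto_Lim:
  fixes g :: "'a \<Rightarrow> 'b :: t2_space"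
  assumes F: "ultrafilter F" and K: "compact K" and g: "eventually (\<lambda>x. g x \<in> K) F"
  shows "(g \<longlongrightarrow> Lim F g) F" and "Lim F g \<in> K"
proof -
  have "F \<noteq> bot" using F by (simp add: ultrafilter_def)
  then have "filtermap g F \<noteq> bot" "eventually (\<lambda>y. y \<in> K) (filtermap g F)"
    using g by (simp_all add: filtermap_bot_iff eventually_filtermap)
  then obtain L where L: "L \<in> K" "inf (nhds L) (filtermap g F) \<noteq> bot"
    using K unfolding compact_filter by blast
  text \<open>A cluster point of an ultrafilter is a limit of it.\<close>
  have lim: "(g \<longlongrightarrow> L) F"
    unfolding tendsto_def
  proof (intro allI impI)
    fix S assume "open S" "L \<in> S"
    then have "eventually (\<lambda>y. y \<in> S) (nhds L)" by (rule eventually_nhds_in_open)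
    moreover have "\<not> eventually (\<lambda>y. y \<notin> S) (filtermap g F)"
    proof
      assume "eventually (\<lambda>y. y \<notin> S) (filtermap g F)"
      with \<open>eventually (\<lambda>y. y \<in> S) (nhds L)\<close>
      have "eventually (\<lambda>y. False) (inf (nhds L) (filtermap g F))"
        unfolding eventually_inf by blast
      with L(2) show False by (simp add: trivial_limit_def)
    qed
    ultimately show "eventually (\<lambda>x. g x \<in> S) F"
      using F by (auto simp: ultrafilter_def eventually_filtermap)
  qed
  then show "(g \<longlongrightarrow> Lim F g) F" "Lim F g \<in> K"
    using tendsto_Lim[OF \<open>F \<noteq> bot\<close> lim] L by auto
qed

section \<open>Power sums\<close>

lemma powr_mean_value:
  fixes x y s :: real
  assumes "0 < y" "y < x"
  shows "\<exists>z. y < z \<and> z < x \<and> x powr s - y powr s = (x - y) * (s * z powr (s - 1))"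
proof -
  have D: "((\<lambda>z. z powr s) has_real_derivative s * z powr (s - 1)) (at z)" if "z > 0" for z
    using has_real_derivative_powr[OF that] .
  have "continuous_on {y..x} (\<lambda>z. z powr s)"
    using assms by (intro continuous_at_imp_continuous_on ballI DERIV_isCont[OF D]) auto
  moreover have "(\<lambda>z. z powr s) differentiable (at z)" if "y < z" for z
    using D[of z] assms that by (meson differentiableI has_field_derivative_imp_has_derivative less_trans)
  ultimately obtain l z where z: "y < z" "z < x" "DERIV (\<lambda>z. z powr s) z :> l"
    "x powr s - y powr s = (x - y) * l"
    using MVT[OF assms(2)] by blast
  have "l = s * z powr (s - 1)" using DERIV_unique[OF z(3) D] z assms by auto
  then show ?thesis using z by blast
qed

lemma concave_powr_diff_ge:
  fixes x y s :: real
  assumes "0 < y" "y < x" "0 \<le> s" "s \<le> 1"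
  shows "s * x powr (s - 1) * (x - y) \<le> x powr s - y powr s"
proof -
  obtain z where z: "y < z" "z < x" "x powr s - y powr s = (x - y) * (s * z powr (s - 1))"
    using powr_mean_value[OF assms(1,2)] by blast
  have "x powr (s - 1) \<le> z powr (s - 1)"
    using z assms by (intro powr_mono2') auto
  then have "s * x powr (s - 1) * (x - y) \<le> s * z powr (s - 1) * (x - y)"
    using assms by (intro mult_right_mono mult_left_mono) auto
  then show ?thesis using z by (simp add: algebra_simps)
qed

lemma convex_powr_diff_le:
  fixes x y s :: real
  assumes "0 < y" "y < x" "1 \<le> s"
  shows "x powr s - y powr s \<le> s * x powr (s - 1) * (x - y)"
proof -
  obtain z where z: "y < z" "z < x" "x powr s - y powr s = (x - y) * (s * z powr (s - 1))"
    using powr_mean_value[OF assms(1,2)] by blast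
  have "z powr (s - 1) \<le> x powr (s - 1)"
    using z assms by (intro powr_mono2) auto
  then have "s * z powr (s - 1) * (x - y) \<le> s * x powr (s - 1) * (x - y)"
    using assms by (intro mult_right_mono mult_left_mono) auto
  then show ?thesis using z by (simp add: algebra_simps)
qed

definition power_sum :: "real \<Rightarrow> nat \<Rightarrow> real" where
  "power_sum \<alpha> n = (\<Sum>k=1..n. real k powr \<alpha>)"

lemma power_sum_Suc: "power_sum \<alpha> (Suc n) = power_sum \<alpha> n + real (Suc n) powr \<alpha>"
  by (simp add: power_sum_def)

lemma power_sum_nonneg: "0 \<le> power_sum \<alpha> n"
  by (simp add: power_sum_def sum_nonneg)

lemma wcnt_Npos: "wcnt \<alpha> Npos n = power_sum \<alpha> n"
proof -
  have "Npos \<inter> {1..n} = {1..n}" by (auto simp: Npos_def)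
  then show ?thesis by (simp add: wcnt_def power_sum_def)
qed

lemma ln_le_power_sum:
  assumes "-1 \<le> \<alpha>"
  shows "ln (real n + 1) \<le> power_sum \<alpha> n"
proof -
  have "ln (real n + 1) \<le> harm n" by (rule ln_le_harm)
  also have "harm n = power_sum (-1) n"
    unfolding harm_def power_sum_def by (intro sum.cong) (auto simp: powr_minus)
  also have "\<dots> \<le> power_sum \<alpha> n"
    unfolding power_sum_def using assms by (intro sum_mono powr_mono) auto
  finally show ?thesis .
qed

lemma power_sum_pos: "-1 \<le> \<alpha> \<Longrightarrow> 1 \<le> n \<Longrightarrow> 0 < power_sum \<alpha> n"
  using ln_le_power_sum[of \<alpha> n] ln_gt_zero[of "real n + 1"] by linarith

lemma filterlim_power_sum_at_top:
  assumes "-1 \<le> \<alpha>"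
  shows "filterlim (power_sum \<alpha>) at_top sequentially"
proof (rule filterlim_at_top_mono)
  show "filterlim (\<lambda>n. ln (real n + 1)) at_top sequentially" by real_asymp
qed (use ln_le_power_sum[OF assms] in auto)

lemma power_sum_le_of_neg:
  assumes "-1 < \<alpha>" "\<alpha> < 0"
  shows "power_sum \<alpha> n \<le> real n powr (\<alpha> + 1) / (\<alpha> + 1)"
proof (induction n)
  case (Suc n)
  show ?case
  proof (cases "n = 0")
    case True
    then show ?thesis using assms by (simp add: power_sum_def)
  next
    case False
    have "(\<alpha> + 1) * real (Suc n) powr (\<alpha> + 1 - 1) * (real (Suc n) - real n)
        \<le> real (Suc n) powr (\<alpha> + 1) - real n powr (\<alpha> + 1)"
      using False assms by (intro concave_powr_diff_ge) auto
    then have "real (Suc n) powr \<alpha> \<le> (real (Suc n) powr (\<alpha> + 1) - real n powr (\<alpha> + 1)) / (\<alpha> + 1)"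
      using assms by (simp add: field_simps)
    then show ?thesis using Suc.IH by (simp add: power_sum_Suc diff_divide_distrib)
  qed
qed (simp add: power_sum_def)

lemma powr_le_power_sum_of_nonneg:
  assumes "0 \<le> \<alpha>"
  shows "real n powr (\<alpha> + 1) \<le> (\<alpha> + 1) * power_sum \<alpha> n"
proof (induction n)
  case (Suc n)
  show ?case
  proof (cases "n = 0")
    case True
    then show ?thesis using assms by (simp add: power_sum_def)
  next
    case False
    have "real (Suc n) powr (\<alpha> + 1) - real n powr (\<alpha> + 1)
        \<le> (\<alpha> + 1) * real (Suc n) powr (\<alpha> + 1 - 1) * (real (Suc n) - real n)"
      using False assms by (intro convex_powr_diff_le) auto
    then show ?thesis using Suc.IH by (simp add: power_sum_Suc algebra_simps)
  qed
qed (simp add: power_sum_def)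

lemma powr_le_power_sum:
  assumes "-1 \<le> \<alpha>" "1 \<le> n"
  shows "real n powr (\<alpha> + 1) \<le> (\<alpha> + 2) * power_sum \<alpha> n"
proof (cases "\<alpha> \<le> 0")
  case True
  have "real n powr (\<alpha> + 1) = (\<Sum>k=1..n. real n powr \<alpha>)"
    using assms by (simp add: powr_add)
  also have "\<dots> \<le> power_sum \<alpha> n"
    unfolding power_sum_def using True by (intro sum_mono powr_mono2') auto
  also have "\<dots> \<le> (\<alpha> + 2) * power_sum \<alpha> n"
    using assms power_sum_nonneg[of \<alpha> n] by (simp add: mult_le_cancel_right1)
  finally show ?thesis .
next
  case False
  then have "real n powr (\<alpha> + 1) \<le> (\<alpha> + 1) * power_sum \<alpha> n"
    by (intro powr_le_power_sum_of_nonneg) auto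
  also have "\<dots> \<le> (\<alpha> + 2) * power_sum \<alpha> n"
    using power_sum_nonneg[of \<alpha> n] by (intro mult_right_mono) auto
  finally show ?thesis .
qed

definition moment_const :: "real \<Rightarrow> real" where
  "moment_const \<alpha> = 1 + 2 / (\<alpha> + 1)"

lemma one_le_moment_const: "-1 < \<alpha> \<Longrightarrow> 1 \<le> moment_const \<alpha>"
  by (simp add: moment_const_def)

lemma power_sum_le_moment_const:
  assumes "-1 < \<alpha>" "1 \<le> n"
  shows "power_sum \<alpha> n \<le> moment_const \<alpha> * real n * real (Suc n) powr \<alpha>"
proof (cases "0 \<le> \<alpha>")
  case True
  have "power_sum \<alpha> n \<le> (\<Sum>k=1..n. real (Suc n) powr \<alpha>)"
    unfolding power_sum_def using True by (intro sum_mono powr_mono2) auto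
  also have "\<dots> = 1 * real n * real (Suc n) powr \<alpha>" by simp
  also have "\<dots> \<le> moment_const \<alpha> * real n * real (Suc n) powr \<alpha>"
    using one_le_moment_const[OF assms(1)] by (intro mult_right_mono) auto
  finally show ?thesis .
next
  case False
  have "1 / 2 \<le> 2 powr \<alpha>"
    using powr_mono[of "-1" \<alpha> 2] assms by (simp add: powr_minus_divide)
  then have "real n powr \<alpha> \<le> 2 * (real n * 2) powr \<alpha>"
    using mult_left_mono[of 1 "2 * 2 powr \<alpha>" "real n powr \<alpha>"] by (simp add: powr_mult)
  also have "(real n * 2) powr \<alpha> \<le> real (Suc n) powr \<alpha>"
    using False assms by (intro powr_mono2') auto
  finally have half: "real n powr \<alpha> \<le> 2 * real (Suc n) powr \<alpha>" by simp
  have "power_sum \<alpha> n \<le> real n * real n powr \<alpha> / (\<alpha> + 1)"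
    using power_sum_le_of_neg[of \<alpha> n] False assms by (simp add: powr_add mult.commute)
  also have "\<dots> \<le> real n * (2 * real (Suc n) powr \<alpha>) / (\<alpha> + 1)"
    using half assms by (intro divide_right_mono mult_left_mono) auto
  also have "\<dots> = 2 / (\<alpha> + 1) * real n * real (Suc n) powr \<alpha>" by simp
  also have "\<dots> \<le> moment_const \<alpha> * real n * real (Suc n) powr \<alpha>"
    unfolding moment_const_def by (intro mult_right_mono) auto
  finally show ?thesis .
qed

definition log_moment :: "real \<Rightarrow> nat \<Rightarrow> real" where
  "log_moment \<alpha> n = (\<Sum>k=1..n. real k powr \<alpha> * (ln (real n) - ln (real k)))"

lemma log_moment_Suc:
  "log_moment \<alpha> (Suc n) = log_moment \<alpha> n + (ln (real (Suc n)) - ln (real n)) * power_sum \<alpha> n"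
proof -
  have "log_moment \<alpha> (Suc n) = (\<Sum>k=1..n. real k powr \<alpha> * (ln (real (Suc n)) - ln (real k)))"
    by (simp add: log_moment_def)
  also have "\<dots> = (\<Sum>k=1..n. real k powr \<alpha> * (ln (real n) - ln (real k))
      + (ln (real (Suc n)) - ln (real n)) * real k powr \<alpha>)"
    by (intro sum.cong) (auto simp: algebra_simps)
  finally show ?thesis
    by (simp add: sum.distrib log_moment_def power_sum_def sum_distrib_left)
qed

lemma log_moment_le_moment_const:
  assumes "-1 < \<alpha>"
  shows "log_moment \<alpha> n \<le> moment_const \<alpha> * power_sum \<alpha> n"
proof (induction n)
  case (Suc n)
  show ?case
  proof (cases "n = 0")
    case True
    then show ?thesis using one_le_moment_const[OF assms] by (simp add: log_moment_def power_sum_def)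
  next
    case False
    have "ln (real (Suc n)) - ln (real n) = ln (real (Suc n) / real n)"
      using False by (simp add: ln_div)
    also have "real (Suc n) / real n = 1 + 1 / real n"
      using False by (simp add: field_simps)
    also have "ln (1 + 1 / real n) \<le> 1 / real n" by (rule ln_add_one_self_le_self) simp
    finally have "(ln (real (Suc n)) - ln (real n)) * power_sum \<alpha> n \<le> (1 / real n) * power_sum \<alpha> n"
      using power_sum_nonneg by (intro mult_right_mono)
    also have "\<dots> \<le> (1 / real n) * (moment_const \<alpha> * real n * real (Suc n) powr \<alpha>)"
      using power_sum_le_moment_const[OF assms, of n] False by (intro mult_left_mono) auto
    also have "\<dots> = moment_const \<alpha> * real (Suc n) powr \<alpha>" using False by simp
    finally show ?thesis using Suc.IH by (simp add: log_moment_Suc power_sum_Suc algebra_simps)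
  qed
qed (simp add: log_moment_def power_sum_def)

section \<open>Dependence on the exponent\<close>

lemma weighted_ratio_perturbation:
  fixes w h :: "nat \<Rightarrow> real"
  assumes I: "finite I" "J \<subseteq> I" "I \<noteq> {}"
    and w: "\<And>k. k \<in> I \<Longrightarrow> 0 < w k" and h: "\<And>k. k \<in> I \<Longrightarrow> 0 \<le> h k \<and> h k \<le> 1"
    and deficit: "(\<Sum>k\<in>I. w k * (1 - h k)) \<le> \<eta> * (\<Sum>k\<in>I. w k)"
    and \<eta>: "0 \<le> \<eta>" "\<eta> \<le> 1/2"
  shows "\<bar>(\<Sum>k\<in>J. w k * h k) / (\<Sum>k\<in>I. w k * h k) - (\<Sum>k\<in>J. w k) / (\<Sum>k\<in>I. w k)\<bar> \<le> 4 * \<eta>"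
proof -
  define W where "W = (\<Sum>k\<in>I. w k)"
  define D where "D = (\<Sum>k\<in>I. w k * (1 - h k))"
  define S where "S = (\<Sum>k\<in>J. w k)"
  define d where "d = (\<Sum>k\<in>J. w k * (1 - h k))"
  have wh: "0 \<le> w k * (1 - h k)" if "k \<in> I" for k
    using w[OF that] h[OF that] by simp
  have "0 < W" unfolding W_def using I w by (intro sum_pos) auto
  have "0 \<le> d" unfolding d_def using I wh by (intro sum_nonneg) auto
  have "d \<le> D" unfolding d_def D_def using I wh by (intro sum_mono2) auto
  have "0 \<le> S" unfolding S_def using I w by (intro sum_nonneg) (auto intro: less_imp_le)
  have "S \<le> W" unfolding S_def W_def using I w by (intro sum_mono2) (auto intro: less_imp_le)
  have "D \<le> \<eta> * W" using deficit unfolding D_def W_def .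
  moreover have "\<eta> * W \<le> W / 2" using \<eta> \<open>0 < W\<close> by simp
  ultimately have "W / 2 \<le> W - D" by linarith
  have "\<bar>S * D - W * d\<bar> \<le> 2 * \<eta> * (W * W)"
  proof -
    have "S * D \<le> W * (\<eta> * W)"
      using \<open>0 \<le> S\<close> \<open>S \<le> W\<close> \<open>0 \<le> d\<close> \<open>d \<le> D\<close> \<open>D \<le> \<eta> * W\<close> by (intro mult_mono) auto
    moreover have "W * d \<le> W * (\<eta> * W)"
      using \<open>d \<le> D\<close> \<open>D \<le> \<eta> * W\<close> \<open>0 < W\<close> by (intro mult_left_mono) auto
    moreover have "0 \<le> S * D" "0 \<le> W * d"
      using \<open>0 \<le> S\<close> \<open>0 \<le> d\<close> \<open>d \<le> D\<close> \<open>0 < W\<close> by simp_all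
    ultimately show ?thesis by (simp add: abs_le_iff algebra_simps)
  qed
  then have "\<bar>S * D - W * d\<bar> / ((W - D) * W) \<le> (2 * \<eta> * (W * W)) / ((W / 2) * W)"
    using \<open>W / 2 \<le> W - D\<close> \<open>0 < W\<close> \<eta> by (intro frac_le mult_right_mono) auto
  moreover have "(S - d) / (W - D) - S / W = (S * D - W * d) / ((W - D) * W)"
    using \<open>W / 2 \<le> W - D\<close> \<open>0 < W\<close> by (simp add: field_simps)
  moreover have "(\<Sum>k\<in>I. w k * h k) = W - D" "(\<Sum>k\<in>J. w k * h k) = S - d"
    unfolding W_def D_def S_def d_def by (simp_all add: algebra_simps sum_subtractf)
  moreover have "(2 * \<eta> * (W * W)) / ((W / 2) * W) = 4 * \<eta>"
    using \<open>0 < W\<close> by simp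
  ultimately show ?thesis
    using \<open>W / 2 \<le> W - D\<close> \<open>0 < W\<close> by (simp add: abs_divide flip: W_def S_def)
qed

lemma powr_deficit_sum_le:
  assumes "-1 < \<alpha>" "0 \<le> \<delta>"
  shows "(\<Sum>k=1..n. real k powr \<alpha> * (1 - (real k / real n) powr \<delta>))
           \<le> \<delta> * moment_const \<alpha> * power_sum \<alpha> n"
proof -
  have "1 - (real k / real n) powr \<delta> \<le> \<delta> * (ln (real n) - ln (real k))" if "k \<in> {1..n}" for k
  proof -
    define t where "t = \<delta> * (ln (real k) - ln (real n))"
    have "(real k / real n) powr \<delta> = exp t"
      using that by (simp add: powr_def ln_div t_def)
    moreover have "1 + t \<le> exp t" by (rule exp_ge_add_one_self)
    ultimately have "1 - (real k / real n) powr \<delta> \<le> - t" by linarith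
    then show ?thesis by (simp add: t_def algebra_simps)
  qed
  then have "(\<Sum>k=1..n. real k powr \<alpha> * (1 - (real k / real n) powr \<delta>))
      \<le> (\<Sum>k=1..n. real k powr \<alpha> * (\<delta> * (ln (real n) - ln (real k))))"
    by (intro sum_mono mult_left_mono) auto
  also have "\<dots> = \<delta> * log_moment \<alpha> n"
    unfolding log_moment_def sum_distrib_left by (intro sum.cong) auto
  also have "\<dots> \<le> \<delta> * (moment_const \<alpha> * power_sum \<alpha> n)"
    using log_moment_le_moment_const[OF assms(1)] assms(2) by (intro mult_left_mono) auto
  finally show ?thesis by simp
qed

lemma wratio_lipschitz:
  assumes "-1 < \<alpha>" "\<alpha> \<le> \<beta>" "(\<beta> - \<alpha>) * moment_const \<alpha> \<le> 1/2"
  shows "\<bar>wratio \<beta> E n - wratio \<alpha> E n\<bar> \<le> 4 * ((\<beta> - \<alpha>) * moment_const \<alpha>)"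
proof (cases "n = 0")
  case True
  then show ?thesis using assms one_le_moment_const[OF assms(1)] by (simp add: wratio_def wcnt_def)
next
  case False
  define \<delta> where "\<delta> = \<beta> - \<alpha>"
  define w where "w k = real k powr \<alpha>" for k :: nat
  define h where "h k = (real k / real n) powr \<delta>" for k :: nat
  have NI: "Npos \<inter> {1..n} = {1..n}" by (auto simp: Npos_def)
  have "real k powr \<beta> = real n powr \<delta> * (w k * h k)" if "k \<in> {1..n}" for k
    using that False by (simp add: w_def h_def \<delta>_def powr_divide powr_add[symmetric])
  then have "wcnt \<beta> E' n = real n powr \<delta> * (\<Sum>k\<in>E' \<inter> {1..n}. w k * h k)" for E'
    unfolding wcnt_def sum_distrib_left by (intro sum.cong) auto
  moreover have "real n powr \<delta> \<noteq> 0" using False by simp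
  ultimately have "wratio \<beta> E n = (\<Sum>k\<in>E \<inter> {1..n}. w k * h k) / (\<Sum>k\<in>{1..n}. w k * h k)"
    unfolding wratio_def by (simp only: NI mult_divide_mult_cancel_left_if) simp
  moreover have "wratio \<alpha> E n = (\<Sum>k\<in>E \<inter> {1..n}. w k) / (\<Sum>k\<in>{1..n}. w k)"
    unfolding wratio_def wcnt_def NI w_def ..
  moreover have "\<bar>(\<Sum>k\<in>E \<inter> {1..n}. w k * h k) / (\<Sum>k\<in>{1..n}. w k * h k)
      - (\<Sum>k\<in>E \<inter> {1..n}. w k) / (\<Sum>k\<in>{1..n}. w k)\<bar> \<le> 4 * (\<delta> * moment_const \<alpha>)"
  proof (rule weighted_ratio_perturbation)
    show "(\<Sum>k\<in>{1..n}. w k * (1 - h k)) \<le> \<delta> * moment_const \<alpha> * (\<Sum>k\<in>{1..n}. w k)"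
      using powr_deficit_sum_le[of \<alpha> \<delta> n] assms
      by (simp add: w_def h_def \<delta>_def power_sum_def)
    show "0 \<le> h k \<and> h k \<le> 1" if "k \<in> {1..n}" for k
      using that assms unfolding h_def \<delta>_def by (simp add: powr_le1)
    show "0 \<le> \<delta> * moment_const \<alpha>"
      using assms one_le_moment_const[OF assms(1)] by (simp add: \<delta>_def)
  qed (use False assms in \<open>auto simp: w_def \<delta>_def\<close>)
  ultimately show ?thesis by (simp add: \<delta>_def)
qed

section \<open>Weighted densities of sets with a natural density\<close>

lemma summation_by_parts:
  fixes c w :: "nat \<Rightarrow> real"
  assumes "c 0 = 0"
  shows "(\<Sum>k=1..n. (c k - c (k - 1)) * w k) = c n * w n + (\<Sum>k=1..<n. c k * (w k - w (Suc k)))"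
proof (induction n)
  case (Suc n)
  show ?case
  proof (cases "n = 0")
    case False
    then have "{1..<Suc n} = insert n {1..<n}" by auto
    then show ?thesis using Suc.IH by (simp add: algebra_simps)
  qed (use assms in simp)
qed (use assms in simp)

lemma sum_mult_powr_increment:
  "(\<Sum>k=1..<n. real k * (real (Suc k) powr \<alpha> - real k powr \<alpha>)) = real n powr (\<alpha> + 1) - power_sum \<alpha> n"
proof (induction n)
  case (Suc n)
  show ?case
  proof (cases "n = 0")
    case False
    then have "{1..<Suc n} = insert n {1..<n}" by auto
    moreover have "real n powr (\<alpha> + 1) = real n * real n powr \<alpha>"
      using False by (simp add: powr_add)
    moreover have "real (Suc n) powr (\<alpha> + 1) = real (Suc n) * real (Suc n) powr \<alpha>"
      by (simp add: powr_add)
    ultimately show ?thesis using Suc.IH by (simp add: power_sum_Suc ring_distribs)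
  qed (simp add: power_sum_def)
qed (simp add: power_sum_def)

lemma sum_mult_abs_powr_increment_le:
  "(\<Sum>k=1..<n. real k * \<bar>real k powr \<alpha> - real (Suc k) powr \<alpha>\<bar>) \<le> real n powr (\<alpha> + 1) + power_sum \<alpha> n"
proof (cases "0 \<le> \<alpha>")
  case True
  then have "(\<Sum>k=1..<n. real k * \<bar>real k powr \<alpha> - real (Suc k) powr \<alpha>\<bar>)
      = (\<Sum>k=1..<n. real k * (real (Suc k) powr \<alpha> - real k powr \<alpha>))"
    by (intro sum.cong) (auto simp: abs_of_nonpos powr_mono2)
  also have "\<dots> \<le> real n powr (\<alpha> + 1) + power_sum \<alpha> n"
    unfolding sum_mult_powr_increment using power_sum_nonneg[of \<alpha> n] by simp
  finally show ?thesis .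
next
  case False
  then have "(\<Sum>k=1..<n. real k * \<bar>real k powr \<alpha> - real (Suc k) powr \<alpha>\<bar>)
      = - (\<Sum>k=1..<n. real k * (real (Suc k) powr \<alpha> - real k powr \<alpha>))"
    unfolding sum_negf[symmetric]
    by (intro sum.cong) (auto simp: abs_of_nonneg powr_mono2' algebra_simps)
  also have "\<dots> \<le> real n powr (\<alpha> + 1) + power_sum \<alpha> n"
    unfolding sum_mult_powr_increment by simp
  finally show ?thesis .
qed

definition discrepancy :: "nat set \<Rightarrow> real \<Rightarrow> nat \<Rightarrow> real" where
  "discrepancy E L k = real (cnt E k) - L * real k"

lemma discrepancy_Suc:
  "discrepancy E L (Suc k) - discrepancy E L k = (if Suc k \<in> E then 1 else 0) - L"
proof -
  have "{1..Suc k} = insert (Suc k) {1..k}" by auto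
  then show ?thesis by (simp add: discrepancy_def cnt_def Int_insert_right card_insert_if algebra_simps)
qed

lemma wcnt_minus_power_sum:
  "wcnt \<alpha> E n - L * power_sum \<alpha> n
     = discrepancy E L n * real n powr \<alpha>
       + (\<Sum>k=1..<n. discrepancy E L k * (real k powr \<alpha> - real (Suc k) powr \<alpha>))"
proof -
  have "wcnt \<alpha> E n = (\<Sum>k=1..n. if k \<in> E then real k powr \<alpha> else 0)"
    unfolding wcnt_def by (subst Int_commute) (simp add: sum.inter_restrict)
  also have "\<dots> = (\<Sum>k=1..n. (if k \<in> E then 1 else 0) * real k powr \<alpha>)"
    by (intro sum.cong) auto
  finally have "wcnt \<alpha> E n - L * power_sum \<alpha> n
      = (\<Sum>k=1..n. ((if k \<in> E then 1 else 0) - L) * real k powr \<alpha>)"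
    by (simp add: power_sum_def sum_distrib_left left_diff_distrib sum_subtractf)
  also have "\<dots> = (\<Sum>k=1..n. (discrepancy E L k - discrepancy E L (k - 1)) * real k powr \<alpha>)"
  proof (intro sum.cong refl)
    fix k assume "k \<in> {1..n}"
    then obtain j where "k = Suc j" using not0_implies_Suc by force
    then show "((if k \<in> E then 1 else 0) - L) * real k powr \<alpha>
        = (discrepancy E L k - discrepancy E L (k - 1)) * real k powr \<alpha>"
      by (simp add: discrepancy_Suc)
  qed
  also have "\<dots> = discrepancy E L n * real n powr \<alpha>
      + (\<Sum>k=1..<n. discrepancy E L k * (real k powr \<alpha> - real (Suc k) powr \<alpha>))"
    by (rule summation_by_parts) (simp add: discrepancy_def cnt_def)
  finally show ?thesis .
qed

lemma wcnt_discrepancy_le: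
  assumes "-1 \<le> \<alpha>" "1 \<le> K" "K \<le> n" "0 \<le> \<epsilon>"
    and small: "\<And>k. K \<le> k \<Longrightarrow> \<bar>discrepancy E L k\<bar> \<le> \<epsilon> * real k"
  shows "\<bar>wcnt \<alpha> E n - L * power_sum \<alpha> n\<bar>
           \<le> (\<Sum>k=1..<K. \<bar>discrepancy E L k\<bar> * \<bar>real k powr \<alpha> - real (Suc k) powr \<alpha>\<bar>)
              + \<epsilon> * (2 * \<alpha> + 5) * power_sum \<alpha> n"
proof -
  define \<Delta> where "\<Delta> k = \<bar>real k powr \<alpha> - real (Suc k) powr \<alpha>\<bar>" for k
  define M where "M = (\<Sum>k=1..<K. \<bar>discrepancy E L k\<bar> * \<Delta> k)"
  define P where "P = power_sum \<alpha> n"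
  have "\<bar>wcnt \<alpha> E n - L * P\<bar> \<le> \<bar>discrepancy E L n\<bar> * real n powr \<alpha> + (\<Sum>k=1..<n. \<bar>discrepancy E L k\<bar> * \<Delta> k)"
    unfolding P_def wcnt_minus_power_sum \<Delta>_def
    by (rule order_trans[OF abs_triangle_ineq add_mono]) (auto intro: order_trans[OF sum_abs] simp: abs_mult)
  also have "\<bar>discrepancy E L n\<bar> * real n powr \<alpha> \<le> \<epsilon> * real n powr (\<alpha> + 1)"
    using small[of n] assms by (simp add: powr_add mult_right_mono)
  also have "(\<Sum>k=1..<n. \<bar>discrepancy E L k\<bar> * \<Delta> k) = M + (\<Sum>k=K..<n. \<bar>discrepancy E L k\<bar> * \<Delta> k)"
    unfolding M_def using assms by (intro sum.atLeastLessThan_concat[symmetric]) auto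
  also have "(\<Sum>k=K..<n. \<bar>discrepancy E L k\<bar> * \<Delta> k) \<le> (\<Sum>k=1..<n. \<epsilon> * (real k * \<Delta> k))"
  proof -
    have "(\<Sum>k=K..<n. \<bar>discrepancy E L k\<bar> * \<Delta> k) \<le> (\<Sum>k=K..<n. \<epsilon> * (real k * \<Delta> k))"
      using small by (intro sum_mono) (simp add: \<Delta>_def mult.assoc[symmetric] mult_right_mono)
    also have "\<dots> \<le> (\<Sum>k=1..<n. \<epsilon> * (real k * \<Delta> k))"
      using assms by (intro sum_mono2) (auto simp: \<Delta>_def)
    finally show ?thesis .
  qed
  also have "(\<Sum>k=1..<n. \<epsilon> * (real k * \<Delta> k)) \<le> \<epsilon> * (real n powr (\<alpha> + 1) + P)"
    unfolding sum_distrib_left[symmetric] P_def \<Delta>_def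
    using assms sum_mult_abs_powr_increment_le by (intro mult_left_mono)
  finally have "\<bar>wcnt \<alpha> E n - L * P\<bar> \<le> M + \<epsilon> * (2 * real n powr (\<alpha> + 1) + P)"
    by (simp add: algebra_simps)
  also have "\<dots> \<le> M + \<epsilon> * (2 * ((\<alpha> + 2) * P) + P)"
    using powr_le_power_sum[of \<alpha> n] assms by (simp add: P_def mult_left_mono)
  finally show ?thesis by (simp add: M_def P_def \<Delta>_def algebra_simps)
qed

lemma wratio_tendsto_density:
  assumes "-1 \<le> \<alpha>" and "has_density E L"
  shows "wratio \<alpha> E \<longlonglongrightarrow> L"
  unfolding tendsto_iff
proof (intro allI impI)
  fix r :: real assume "0 < r"
  define \<epsilon> where "\<epsilon> = r / (2 * (2 * \<alpha> + 5))"
  have "0 < \<epsilon>" using \<open>0 < r\<close> assms by (simp add: \<epsilon>_def)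
  have \<epsilon>r: "\<epsilon> * (2 * \<alpha> + 5) = r / 2" using assms by (simp add: \<epsilon>_def field_simps)
  obtain K0 where K0: "\<And>k. K0 \<le> k \<Longrightarrow> \<bar>real (cnt E k) / real k - L\<bar> < \<epsilon>"
    using LIMSEQ_D[OF assms(2)[unfolded has_density_def] \<open>0 < \<epsilon>\<close>] by auto
  define K where "K = max K0 1"
  have small: "\<bar>discrepancy E L k\<bar> \<le> \<epsilon> * real k" if "K \<le> k" for k
  proof -
    have "discrepancy E L k = real k * (real (cnt E k) / real k - L)"
      using that by (simp add: K_def discrepancy_def field_simps)
    then show ?thesis
      using K0[of k] that by (simp add: K_def abs_mult mult_left_mono mult.commute less_imp_le)
  qed
  define M where "M = (\<Sum>k=1..<K. \<bar>discrepancy E L k\<bar> * \<bar>real k powr \<alpha> - real (Suc k) powr \<alpha>\<bar>)"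
  have "(\<lambda>n. M / power_sum \<alpha> n) \<longlonglongrightarrow> 0"
    using filterlim_power_sum_at_top[OF assms(1)]
    by (intro tendsto_divide_0[OF tendsto_const] filterlim_at_top_imp_at_infinity)
  then have "eventually (\<lambda>n. M / power_sum \<alpha> n < r / 2) sequentially"
    using \<open>0 < r\<close> by (intro order_tendstoD(2)) auto
  moreover have "eventually (\<lambda>n. K \<le> n) sequentially" by (rule eventually_ge_at_top)
  ultimately show "eventually (\<lambda>n. dist (wratio \<alpha> E n) L < r) sequentially"
  proof eventually_elim
    case (elim n)
    have "0 < power_sum \<alpha> n" using elim assms by (intro power_sum_pos) (auto simp: K_def)
    have "dist (wratio \<alpha> E n) L = \<bar>wcnt \<alpha> E n - L * power_sum \<alpha> n\<bar> / power_sum \<alpha> n"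
      using \<open>0 < power_sum \<alpha> n\<close> by (simp add: wratio_def wcnt_Npos dist_real_def field_simps)
    also have "\<dots> \<le> (M + \<epsilon> * (2 * \<alpha> + 5) * power_sum \<alpha> n) / power_sum \<alpha> n"
      using wcnt_discrepancy_le[OF assms(1) _ elim(2) _ small] \<open>0 < \<epsilon>\<close> \<open>0 < power_sum \<alpha> n\<close>
      by (intro divide_right_mono) (auto simp: K_def M_def)
    also have "\<dots> = M / power_sum \<alpha> n + r / 2"
      using \<open>0 < power_sum \<alpha> n\<close> by (simp add: \<epsilon>r add_divide_distrib)
    finally show ?case using elim(1) by linarith
  qed
qed

section \<open>The density measures \<open>\<mu>\<^sub>\<alpha>\<^sup>F\<close>\<close>

lemma wratio_in_unit_interval: "wratio \<alpha> E n \<in> {0..1}"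
proof -
  have "0 \<le> wcnt \<alpha> E n" unfolding wcnt_def by (intro sum_nonneg) auto
  moreover have "wcnt \<alpha> E n \<le> wcnt \<alpha> Npos n"
    unfolding wcnt_def by (intro sum_mono2) (auto simp: Npos_def)
  ultimately show ?thesis by (auto simp: wratio_def divide_le_eq_1)
qed

lemma free_ultrafilter_le_sequentially: "free_ultrafilter F \<Longrightarrow> F \<le> sequentially"
  by (simp add: free_ultrafilter_def cofinite_eq_sequentially)

lemma
  assumes "free_ultrafilter F"
  shows mu_alpha_F_tendsto: "(wratio \<alpha> E \<longlongrightarrow> mu_alpha_F F \<alpha> E) F"
    and mu_alpha_F_in_unit_interval: "mu_alpha_F F \<alpha> E \<in> {0..1}"
  using ultrafilter_tendsto_Lim[of F "{0..1}" "wratio \<alpha> E"] assms wratio_in_unit_interval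
  unfolding mu_alpha_F_def F_lim_def free_ultrafilter_iff by auto

lemma mu_alpha_F_eqI:
  assumes "free_ultrafilter F" "(wratio \<alpha> E \<longlongrightarrow> L) F"
  shows "mu_alpha_F F \<alpha> E = L"
  using assms tendsto_Lim unfolding mu_alpha_F_def F_lim_def free_ultrafilter_def by blast

lemma wcnt_Un: "E \<inter> G = {} \<Longrightarrow> wcnt \<alpha> (E \<union> G) n = wcnt \<alpha> E n + wcnt \<alpha> G n"
  unfolding wcnt_def by (subst sum.union_disjoint[symmetric]) (auto intro: sum.cong)

lemma density_measure_mu_alpha_F:
  assumes F: "free_ultrafilter F" and "-1 \<le> \<alpha>"
  shows "density_measure (mu_alpha_F F \<alpha>)"
  unfolding density_measure_def
proof (intro conjI allI impI)
  fix E show "0 \<le> mu_alpha_F F \<alpha> E" "mu_alpha_F F \<alpha> E \<le> 1"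
    using mu_alpha_F_in_unit_interval[OF F] by auto
next
  have "eventually (\<lambda>n. wratio \<alpha> Npos n = 1) F"
    using free_ultrafilter_le_sequentially[OF F] eventually_ge_at_top[of 1]
    by (rule filter_leD[THEN eventually_mono])
      (use power_sum_pos[OF assms(2)] in \<open>force simp: wratio_def wcnt_Npos\<close>)
  then show "mu_alpha_F F \<alpha> Npos = 1"
    by (intro mu_alpha_F_eqI[OF F] tendsto_eventually)
next
  fix E G :: "nat set" assume "E \<inter> G = {}"
  then have "wratio \<alpha> (E \<union> G) = (\<lambda>n. wratio \<alpha> E n + wratio \<alpha> G n)"
    by (auto simp: wratio_def wcnt_Un add_divide_distrib)
  then show "mu_alpha_F F \<alpha> (E \<union> G) = mu_alpha_F F \<alpha> E + mu_alpha_F F \<alpha> G"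
    by (auto intro!: mu_alpha_F_eqI[OF F] tendsto_add mu_alpha_F_tendsto[OF F])
next
  fix E L assume "has_density E L"
  then show "mu_alpha_F F \<alpha> E = L"
    using wratio_tendsto_density[OF assms(2)] free_ultrafilter_le_sequentially[OF F]
    by (intro mu_alpha_F_eqI[OF F]) (auto intro: tendsto_mono)
qed

lemma density_measure_convex_combination:
  assumes "density_measure \<mu>\<^sub>1" "density_measure \<mu>\<^sub>2" "0 \<le> p" "p \<le> 1"
  shows "density_measure (\<lambda>E. p * \<mu>\<^sub>1 E + (1 - p) * \<mu>\<^sub>2 E)"
  using assms unfolding density_measure_def
proof (intro conjI allI impI)
  fix E assume "E \<subseteq> Npos"
  then have "\<mu>\<^sub>1 E \<in> {0..1}" "\<mu>\<^sub>2 E \<in> {0..1}"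
    using assms unfolding density_measure_def by auto
  then show "0 \<le> p * \<mu>\<^sub>1 E + (1 - p) * \<mu>\<^sub>2 E" "p * \<mu>\<^sub>1 E + (1 - p) * \<mu>\<^sub>2 E \<le> 1"
    using assms convex_bound_le[of "\<mu>\<^sub>1 E" 1 "\<mu>\<^sub>2 E" p "1 - p"] by auto
qed (auto simp: algebra_simps)

lemma mu_alpha_F_lipschitz:
  assumes F: "free_ultrafilter F" and "-1 < \<alpha>" "\<alpha> \<le> \<beta>" "(\<beta> - \<alpha>) * moment_const \<alpha> \<le> 1/2"
  shows "\<bar>mu_alpha_F F \<beta> E - mu_alpha_F F \<alpha> E\<bar> \<le> 4 * ((\<beta> - \<alpha>) * moment_const \<alpha>)"
proof -
  have "((\<lambda>n. wratio \<beta> E n - wratio \<alpha> E n) \<longlongrightarrow> mu_alpha_F F \<beta> E - mu_alpha_F F \<alpha> E) F"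
    by (intro tendsto_diff mu_alpha_F_tendsto[OF F])
  then have "((\<lambda>n. \<bar>wratio \<beta> E n - wratio \<alpha> E n\<bar>) \<longlongrightarrow> \<bar>mu_alpha_F F \<beta> E - mu_alpha_F F \<alpha> E\<bar>) F"
    by (rule tendsto_rabs)
  then show ?thesis
    using wratio_lipschitz[OF assms(2-4)] F
    by (intro tendsto_upperbound[where F = F]) (auto simp: free_ultrafilter_def)
qed

section \<open>Measurability on \<open>\<Omega>\<close>\<close>

lemma topspace_stone_topology: "topspace stone_topology = betaNstar"
proof -
  have "UNIV \<in> range (\<lambda>A. {F :: nat filter. eventually (\<lambda>n. n \<in> A) F})"
    by (rule range_eqI[of _ _ UNIV]) simp
  then have "\<Union>(range (\<lambda>A. {F :: nat filter. eventually (\<lambda>n. n \<in> A) F})) = UNIV"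
    by blast
  then show ?thesis
    by (simp only: stone_topology_def topspace_subtopology topology_generated_by_topspace) simp
qed

lemma topspace_Omega_topology: "topspace Omega_topology = betaNstar \<times> {-1..}"
  by (simp only: Omega_topology_def topspace_prod_topology topspace_stone_topology
      topspace_euclidean_subtopology)

lemma openin_stone_topology_eventually:
  "openin stone_topology (betaNstar \<inter> {F. eventually (\<lambda>n. n \<in> P) F})"
proof -
  have "{F. eventually (\<lambda>n. n \<in> P) F} \<in> range (\<lambda>A. {F. eventually (\<lambda>n. n \<in> A) F})"
    by (rule rangeI)
  then show ?thesis
    unfolding stone_topology_def by (intro openin_subtopology_Int2 topology_generated_by_Basis)
qed

lemma space_borel_of: "space (borel_of X) = topspace X"
  unfolding borel_of_def by (simp add: space_measure_of_conv)

lemma sets_borel_of: "sets (borel_of X) = sigma_sets (topspace X) {U. openin X U}"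
  unfolding borel_of_def by (rule sets_measure_of) (use openin_subset in blast)

lemma borel_measurable_borel_of_continuous_map:
  assumes "continuous_map X euclideanreal f"
  shows "f \<in> borel_measurable (borel_of X)"
proof (rule borel_measurableI)
  fix S :: "real set" assume "open S"
  then have "openin X {x \<in> topspace X. f x \<in> S}"
    using openin_continuous_map_preimage[OF assms] by (metis open_openin)
  moreover have "f -` S \<inter> space (borel_of X) = {x \<in> topspace X. f x \<in> S}"
    unfolding space_borel_of by blast
  ultimately show "f -` S \<inter> space (borel_of X) \<in> sets (borel_of X)"
    unfolding sets_borel_of by (simp add: sigma_sets.Basic)
qed

lemma continuous_map_mu_alpha_F: "continuous_map stone_topology euclideanreal (\<lambda>F. mu_alpha_F F \<alpha> E)"
  unfolding continuous_map_def
proof (intro conjI allI impI)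
  fix U :: "real set" assume "openin euclideanreal U"
  then have "open U" by (metis open_openin)
  show "openin stone_topology {F \<in> topspace stone_topology. mu_alpha_F F \<alpha> E \<in> U}"
  proof (subst openin_subopen, intro ballI)
    fix F0 assume "F0 \<in> {F \<in> topspace stone_topology. mu_alpha_F F \<alpha> E \<in> U}"
    then have F0: "free_ultrafilter F0" and "mu_alpha_F F0 \<alpha> E \<in> U"
      by (auto simp: topspace_stone_topology betaNstar_def)
    then obtain e where "0 < e" and e: "ball (mu_alpha_F F0 \<alpha> E) e \<subseteq> U"
      using \<open>open U\<close> by (meson openE)
    define P where "P = {n. dist (wratio \<alpha> E n) (mu_alpha_F F0 \<alpha> E) < e / 2}"
    define T where "T = betaNstar \<inter> {F. eventually (\<lambda>n. n \<in> P) F}"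
    have "F0 \<in> T"
      using F0 tendstoD[OF mu_alpha_F_tendsto[OF F0], of "e/2"] \<open>0 < e\<close>
      by (simp add: T_def P_def betaNstar_def)
    moreover have "mu_alpha_F F \<alpha> E \<in> U" if "F \<in> T" for F
    proof -
      have F: "free_ultrafilter F" and evP: "eventually (\<lambda>n. n \<in> P) F"
        using that by (auto simp: T_def betaNstar_def)
      from evP have "eventually (\<lambda>n. wratio \<alpha> E n \<in> cball (mu_alpha_F F0 \<alpha> E) (e/2)) F"
        by eventually_elim (auto simp: P_def dist_commute)
      then have "mu_alpha_F F \<alpha> E \<in> cball (mu_alpha_F F0 \<alpha> E) (e/2)"
        using F by (intro Lim_in_closed_set[OF closed_cball _ _ mu_alpha_F_tendsto[OF F]])
          (auto simp: free_ultrafilter_def)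
      then show ?thesis using e \<open>0 < e\<close> by (auto simp: dist_commute)
    qed
    ultimately show "\<exists>T. openin stone_topology T \<and> F0 \<in> T \<and>
        T \<subseteq> {F \<in> topspace stone_topology. mu_alpha_F F \<alpha> E \<in> U}"
      using openin_stone_topology_eventually[of P]
      by (intro exI[of _ T]) (auto simp: T_def topspace_stone_topology)
  qed
qed auto

lemma borel_measurable_mu_alpha_F_fst:
  "(\<lambda>\<omega>. mu_alpha_F (fst \<omega>) \<alpha> E) \<in> borel_measurable (borel_of Omega_topology)"
proof (rule borel_measurable_borel_of_continuous_map)
  show "continuous_map Omega_topology euclideanreal (\<lambda>\<omega>. mu_alpha_F (fst \<omega>) \<alpha> E)"
    unfolding Omega_topology_def
    using continuous_map_compose[OF continuous_map_fst continuous_map_mu_alpha_F]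
    by (simp add: comp_def)
qed

lemma borel_measurable_snd_Omega: "snd \<in> borel_measurable (borel_of Omega_topology)"
proof (rule borel_measurable_borel_of_continuous_map)
  show "continuous_map Omega_topology euclideanreal snd"
    unfolding Omega_topology_def using continuous_map_snd by (rule continuous_map_into_fulltopology)
qed

definition dyadic_ceiling :: "nat \<Rightarrow> real \<Rightarrow> real" where
  "dyadic_ceiling m x = of_int \<lceil>2 ^ m * x\<rceil> / 2 ^ m"

lemma dyadic_ceiling_bounds: "x \<le> dyadic_ceiling m x \<and> dyadic_ceiling m x \<le> x + 1 / 2 ^ m"
proof -
  have "2 ^ m * x \<le> of_int \<lceil>2 ^ m * x\<rceil>" "of_int \<lceil>2 ^ m * x\<rceil> \<le> 2 ^ m * x + 1"
    by linarith+
  then show ?thesis unfolding dyadic_ceiling_def by (auto simp: field_simps)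
qed

lemma dyadic_ceiling_minus_one [simp]: "dyadic_ceiling m (-1) = -1"
proof -
  have "\<lceil>(2::real) ^ m * -1\<rceil> = - (2 ^ m)"
    by (metis ceiling_of_int mult_minus1_right of_int_minus of_int_numeral of_int_power)
  then show ?thesis unfolding dyadic_ceiling_def by simp
qed

lemma dyadic_ceiling_tendsto: "(\<lambda>m. dyadic_ceiling m x) \<longlonglongrightarrow> x"
proof (rule tendsto_sandwich[of "\<lambda>m. x" _ _ "\<lambda>m. x + 1 / 2 ^ m"])
  show "(\<lambda>m. x + 1 / 2 ^ m) \<longlonglongrightarrow> x"
    using tendsto_add[OF tendsto_const LIMSEQ_divide_realpow_zero[of 2 1]] by simp
qed (use dyadic_ceiling_bounds in auto)

lemma borel_measurable_mu_alpha_F_dyadic: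
  "(\<lambda>\<omega>. mu_alpha_F (fst \<omega>) (dyadic_ceiling m (snd \<omega>)) E) \<in> borel_measurable (borel_of Omega_topology)"
proof (rule borel_measurableI)
  let ?M = "borel_of Omega_topology"
  fix U :: "real set" assume "open U"
  define g where "g \<omega> = \<lceil>(2::real) ^ m * snd \<omega>\<rceil>" for \<omega> :: "nat filter \<times> real"
  have "g \<in> measurable ?M (count_space UNIV)"
    unfolding g_def by (intro measurable_compose[OF _ measurable_real_ceiling]
        borel_measurable_times borel_measurable_const borel_measurable_snd_Omega)
  then have "g -` {j} \<inter> space ?M \<in> sets ?M" for j
    by (rule measurable_sets) simp
  moreover have "(\<lambda>\<omega>. mu_alpha_F (fst \<omega>) (of_int j / 2 ^ m) E) -` U \<inter> space ?M \<in> sets ?M" for j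
    using measurable_sets[OF borel_measurable_mu_alpha_F_fst borel_open[OF \<open>open U\<close>]] .
  moreover have "(\<lambda>\<omega>. mu_alpha_F (fst \<omega>) (dyadic_ceiling m (snd \<omega>)) E) -` U \<inter> space ?M
      = (\<Union>j. ((\<lambda>\<omega>. mu_alpha_F (fst \<omega>) (of_int j / 2 ^ m) E) -` U \<inter> space ?M) \<inter> (g -` {j} \<inter> space ?M))"
    by (auto simp: dyadic_ceiling_def g_def)
  ultimately show "(\<lambda>\<omega>. mu_alpha_F (fst \<omega>) (dyadic_ceiling m (snd \<omega>)) E) -` U \<inter> space ?M \<in> sets ?M"
    by (auto intro!: sets.countable_UN'')
qed

lemma mu_alpha_F_dyadic_ceiling_tendsto:
  assumes F: "free_ultrafilter F" and "-1 \<le> \<beta>"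
  shows "(\<lambda>m. mu_alpha_F F (dyadic_ceiling m \<beta>) E) \<longlonglongrightarrow> mu_alpha_F F \<beta> E"
proof (cases "\<beta> = -1")
  case False
  then have "-1 < \<beta>" using assms by simp
  define c where "c m = (dyadic_ceiling m \<beta> - \<beta>) * moment_const \<beta>" for m
  have "c \<longlonglongrightarrow> 0"
    unfolding c_def using dyadic_ceiling_tendsto[of \<beta>]
    by (intro tendsto_mult_left_zero) (simp add: LIM_zero_iff)
  then have "eventually (\<lambda>m. c m \<le> 1/2) sequentially"
    by (intro eventually_mono[OF order_tendstoD(2)[of c 0 sequentially "1/2"]]) auto
  then have "eventually (\<lambda>m. norm (mu_alpha_F F (dyadic_ceiling m \<beta>) E - mu_alpha_F F \<beta> E) \<le> 4 * c m)
      sequentially"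
    by eventually_elim
      (use mu_alpha_F_lipschitz[OF F \<open>-1 < \<beta>\<close>] dyadic_ceiling_bounds in \<open>simp add: c_def\<close>)
  moreover have "(\<lambda>m. 4 * c m) \<longlonglongrightarrow> 0"
    using tendsto_mult_right_zero[OF \<open>c \<longlonglongrightarrow> 0\<close>] by simp
  ultimately have "(\<lambda>m. mu_alpha_F F (dyadic_ceiling m \<beta>) E - mu_alpha_F F \<beta> E) \<longlonglongrightarrow> 0"
    by (rule Lim_null_comparison)
  then show ?thesis by (simp add: LIM_zero_iff)
qed simp

lemma borel_measurable_mu_alpha_F:
  "(\<lambda>(F, \<alpha>). mu_alpha_F F \<alpha> E) \<in> borel_measurable (borel_of Omega_topology)"
proof (rule borel_measurable_LIMSEQ_real[OF _ borel_measurable_mu_alpha_F_dyadic])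
  fix \<omega> assume "\<omega> \<in> space (borel_of Omega_topology)"
  then show "(\<lambda>m. mu_alpha_F (fst \<omega>) (dyadic_ceiling m (snd \<omega>)) E) \<longlonglongrightarrow> (case \<omega> of (F, \<alpha>) \<Rightarrow> mu_alpha_F F \<alpha> E)"
    by (cases \<omega>) (auto simp: space_borel_of topspace_Omega_topology betaNstar_def
        intro!: mu_alpha_F_dyadic_ceiling_tendsto)
qed

section \<open>Extreme values and two-point mixtures\<close>

lemma ex_free_ultrafilter_mu_alpha_F_in:
  assumes "closed K" and "\<exists>\<^sub>F n in sequentially. wratio \<alpha> E n \<in> K"
  shows "\<exists>F. free_ultrafilter F \<and> mu_alpha_F F \<alpha> E \<in> K"
proof -
  have "infinite {n. wratio \<alpha> E n \<in> K}"
    using assms(2) by (simp add: frequently_cofinite[symmetric] cofinite_eq_sequentially)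
  then obtain F where F: "free_ultrafilter F" and "eventually (\<lambda>n. n \<in> {n. wratio \<alpha> E n \<in> K}) F"
    using ex_free_ultrafilter_eventually_in by blast
  then have "mu_alpha_F F \<alpha> E \<in> K"
    using Lim_in_closed_set[OF assms(1) _ _ mu_alpha_F_tendsto[OF F]] by (simp add: free_ultrafilter_def)
  then show ?thesis using F by blast
qed

lemma ex_mu_alpha_F_le_of_lower_d_inf_less:
  assumes "lower_d_inf A < ereal x"
  shows "\<exists>F \<alpha>. free_ultrafilter F \<and> -1 \<le> \<alpha> \<and> mu_alpha_F F \<alpha> A \<le> x"
proof -
  obtain \<alpha> where "-1 \<le> \<alpha>" and "liminf (\<lambda>n. ereal (wratio \<alpha> A n)) < ereal x"
    using assms by (auto simp: lower_d_inf_def lower_d_alpha_def INF_less_iff)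
  moreover have "ereal x \<le> liminf (\<lambda>n. ereal (wratio \<alpha> A n))"
    if "eventually (\<lambda>n. x \<le> wratio \<alpha> A n) sequentially"
    using that by (intro Liminf_bounded) simp
  ultimately have "\<not> eventually (\<lambda>n. x \<le> wratio \<alpha> A n) sequentially"
    by (meson not_le)
  then have "\<exists>\<^sub>F n in sequentially. wratio \<alpha> A n \<in> {..x}"
    unfolding not_eventually by (rule frequently_elim1) auto
  then obtain F where "free_ultrafilter F" "mu_alpha_F F \<alpha> A \<in> {..x}"
    using ex_free_ultrafilter_mu_alpha_F_in[OF closed_atMost] by blast
  then show ?thesis using \<open>-1 \<le> \<alpha>\<close> by auto
qed

lemma ex_mu_alpha_F_ge_of_less_upper_d_inf:
  assumes "ereal x < upper_d_inf A"
  shows "\<exists>F \<alpha>. free_ultrafilter F \<and> -1 \<le> \<alpha> \<and> x \<le> mu_alpha_F F \<alpha> A"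
proof -
  obtain \<alpha> where "-1 \<le> \<alpha>" and "ereal x < limsup (\<lambda>n. ereal (wratio \<alpha> A n))"
    using assms by (auto simp: upper_d_inf_def upper_d_alpha_def less_SUP_iff)
  moreover have "limsup (\<lambda>n. ereal (wratio \<alpha> A n)) \<le> ereal x"
    if "eventually (\<lambda>n. wratio \<alpha> A n \<le> x) sequentially"
    using that by (intro Limsup_bounded) simp
  ultimately have "\<not> eventually (\<lambda>n. wratio \<alpha> A n \<le> x) sequentially"
    by (meson not_le)
  then have "\<exists>\<^sub>F n in sequentially. wratio \<alpha> A n \<in> {x..}"
    unfolding not_eventually by (rule frequently_elim1) auto
  then obtain F where "free_ultrafilter F" "mu_alpha_F F \<alpha> A \<in> {x..}"
    using ex_free_ultrafilter_mu_alpha_F_in[OF closed_atLeast] by blast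
  then show ?thesis using \<open>-1 \<le> \<alpha>\<close> by auto
qed

lemma ex_convex_combination_eq:
  fixes y\<^sub>1 y\<^sub>2 x :: real
  assumes "y\<^sub>1 \<le> x" "x \<le> y\<^sub>2"
  shows "\<exists>p\<in>{0..1}. p * y\<^sub>1 + (1 - p) * y\<^sub>2 = x"
proof (cases "y\<^sub>1 = y\<^sub>2")
  case False
  define p where "p = (y\<^sub>2 - x) / (y\<^sub>2 - y\<^sub>1)"
  have "p * y\<^sub>1 + (1 - p) * y\<^sub>2 = y\<^sub>2 - p * (y\<^sub>2 - y\<^sub>1)" by (simp add: algebra_simps)
  also have "\<dots> = x" using False by (simp add: p_def)
  finally show ?thesis using assms False by (intro bexI[of _ p]) (auto simp: p_def field_simps)
qed (use assms in \<open>intro bexI[of _ 1], auto\<close>)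

lemma ex_two_point_prob_measure:
  fixes p :: real
  assumes "a \<in> space M" "b \<in> space M" "p \<in> {0..1}"
  shows "\<exists>\<psi>. prob_space \<psi> \<and> space \<psi> = space M \<and> sets \<psi> = sets M \<and>
           (\<forall>f \<in> borel_measurable M. integrable \<psi> f \<and> (\<integral>\<omega>. f \<omega> \<partial>\<psi>) = p * f a + (1 - p) * f b)"
proof -
  define h where "h c = (if c then a else b)" for c
  have h: "h \<in> measurable (measure_pmf (bernoulli_pmf p)) M"
    using assms by (auto simp: h_def)
  define \<psi> where "\<psi> = distr (measure_pmf (bernoulli_pmf p)) M h"
  have "integrable \<psi> f \<and> (\<integral>\<omega>. f \<omega> \<partial>\<psi>) = p * f a + (1 - p) * f b" if "f \<in> borel_measurable M" for f
    unfolding \<psi>_def integrable_distr_eq[OF h that] integral_distr[OF h that]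
    using assms by (auto simp: h_def intro!: integrable_measure_pmf_finite)
  moreover have "prob_space \<psi>"
    unfolding \<psi>_def by (rule prob_space.prob_space_distr[OF prob_space_measure_pmf h])
  ultimately show ?thesis by (auto simp: \<psi>_def)
qed

theorem theorem4p4:
  fixes A :: "nat set" and x :: real
  assumes "A \<subseteq> Npos"
    and "lower_d_inf A < ereal x" and "ereal x < upper_d_inf A"
  shows "\<exists>(\<psi> :: (nat filter \<times> real) measure) (\<mu> :: nat set \<Rightarrow> real).
           prob_space \<psi> \<and>
           space \<psi> = topspace Omega_topology \<and>
           sets \<psi> = sets (borel_of Omega_topology) \<and>
           (\<forall>E. E \<subseteq> Npos \<longrightarrow>
              integrable \<psi> (\<lambda>(F, \<alpha>). mu_alpha_F F \<alpha> E) \<and>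
              \<mu> E = (\<integral>(F, \<alpha>). mu_alpha_F F \<alpha> E \<partial>\<psi>)) \<and>
           density_measure \<mu> \<and> \<mu> A = x"
proof -
  obtain F\<^sub>1 \<alpha>\<^sub>1 where 1: "free_ultrafilter F\<^sub>1" "-1 \<le> \<alpha>\<^sub>1" "mu_alpha_F F\<^sub>1 \<alpha>\<^sub>1 A \<le> x"
    using ex_mu_alpha_F_le_of_lower_d_inf_less[OF assms(2)] by blast
  obtain F\<^sub>2 \<alpha>\<^sub>2 where 2: "free_ultrafilter F\<^sub>2" "-1 \<le> \<alpha>\<^sub>2" "x \<le> mu_alpha_F F\<^sub>2 \<alpha>\<^sub>2 A"
    using ex_mu_alpha_F_ge_of_less_upper_d_inf[OF assms(3)] by blast
  obtain p where p: "p \<in> {0..1}" "p * mu_alpha_F F\<^sub>1 \<alpha>\<^sub>1 A + (1 - p) * mu_alpha_F F\<^sub>2 \<alpha>\<^sub>2 A = x"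
    using ex_convex_combination_eq[OF 1(3) 2(3)] by blast
  have \<omega>: "(F\<^sub>1, \<alpha>\<^sub>1) \<in> space (borel_of Omega_topology)" "(F\<^sub>2, \<alpha>\<^sub>2) \<in> space (borel_of Omega_topology)"
    using 1 2 by (auto simp: space_borel_of topspace_Omega_topology betaNstar_def)
  obtain \<psi> where \<psi>: "prob_space \<psi>" "space \<psi> = space (borel_of Omega_topology)"
      "sets \<psi> = sets (borel_of Omega_topology)"
    and integral_\<psi>: "\<And>f. f \<in> borel_measurable (borel_of Omega_topology) \<Longrightarrow>
      integrable \<psi> f \<and> (\<integral>\<omega>. f \<omega> \<partial>\<psi>) = p * f (F\<^sub>1, \<alpha>\<^sub>1) + (1 - p) * f (F\<^sub>2, \<alpha>\<^sub>2)"
    using ex_two_point_prob_measure[OF \<omega> p(1)] by blast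
  define \<mu> where "\<mu> E = (\<integral>(F, \<alpha>). mu_alpha_F F \<alpha> E \<partial>\<psi>)" for E
  have \<mu>: "\<mu> = (\<lambda>E. p * mu_alpha_F F\<^sub>1 \<alpha>\<^sub>1 E + (1 - p) * mu_alpha_F F\<^sub>2 \<alpha>\<^sub>2 E)"
    using integral_\<psi>[OF borel_measurable_mu_alpha_F] by (simp add: \<mu>_def fun_eq_iff)
  have "density_measure \<mu>"
    unfolding \<mu> using density_measure_mu_alpha_F 1 2 p(1)
    by (intro density_measure_convex_combination) auto
  then show ?thesis
    using \<psi> p(2) integral_\<psi>[OF borel_measurable_mu_alpha_F]
    by (intro exI[of _ \<psi>] exI[of _ \<mu>]) (simp add: \<mu>_def \<mu>[symmetric] space_borel_of)
qed

end
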